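(* Let $X$ be a Hausdorff space without isolated points. If \textsc{Bob} has a winning strategy in the game $\mathsf{BM}_\mathrm{fin}(X)$, then \textsc{Bob} has a winning strategy in $\mathsf{BM}_\mathrm{fin}(X)$ in which every move $\mathcal{B}_n$ of \textsc{Bob} consists of pairwise disjoint sets.
   Context: The game $\mathsf{BM}_\mathrm{fin}(X)$ on a topological space $X$ is played by \textsc{Alice} and \textsc{Bob} as follows. \textsc{Alice} plays a non-empty open set $A_0$; \textsc{Bob} plays a finite collection $\mathcal{B}_0$ of non-empty open subsets of $A_0$. In inning $n+1$, for each $B \in \mathcal{B}_n$ \textsc{Alice} plays a non-empty open set $A_B \subseteq B$; let $\mathcal{A}_{n+1}=\{A_B : B\in\mathcal{B}_n\}$; then \textsc{Bob} plays a finite collection $\mathcal{B}_{n+1}$ of non-empty open subsets of $\bigcup\mathcal{A}_{n+1}$. Put $B_n=\bigcup\mathcal{B}_n$. \textsc{Bob} wins the play if $\bigcap_{n\in\omega}B_n\neq\emptyset$; otherwise \textsc{Alice} wins. A strategy for \textsc{Bob} is a function assigning a legal move of \textsc{Bob} to each finite sequence of previous moves of \textsc{Alice}; it is winning if \textsc{Bob} wins every play in which he follows it. *)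

theory Defs
  imports "HOL-Analysis.Analysis"
begin

text \<open>A history of Alice's moves is Alice's first move A0 together
with a list fs of her later moves; fs!k is her move in inning k+1, given as a function
assigning to each set B of Bob's previous move the set A_B.\<close>

type_synonym 'a bob_strategy = "'a set \<Rightarrow> ('a set \<Rightarrow> 'a set) list \<Rightarrow> 'a set set"

definition alice_legal :: "'a topology \<Rightarrow> 'a bob_strategy \<Rightarrow> 'a set \<Rightarrow> ('a set \<Rightarrow> 'a set) list \<Rightarrow> bool" where
  "alice_legal X \<sigma> A0 fs \<longleftrightarrow>
     openin X A0 \<and> A0 \<noteq> {} \<and>
     (\<forall>k < length fs. \<forall>B \<in> \<sigma> A0 (take k fs).
        openin X ((fs!k) B) \<and> (fs!k) B \<noteq> {} \<and> (fs!k) B \<subseteq> B)"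

definition bob_region :: "'a bob_strategy \<Rightarrow> 'a set \<Rightarrow> ('a set \<Rightarrow> 'a set) list \<Rightarrow> 'a set" where
  "bob_region \<sigma> A0 fs =
     (if fs = [] then A0 else \<Union>{(last fs) B | B. B \<in> \<sigma> A0 (butlast fs)})"

definition bob_legal_move :: "'a topology \<Rightarrow> 'a set \<Rightarrow> 'a set set \<Rightarrow> bool" where
  "bob_legal_move X S C \<longleftrightarrow> finite C \<and> (\<forall>B \<in> C. openin X B \<and> B \<noteq> {} \<and> B \<subseteq> S)"

definition bob_strategy :: "'a topology \<Rightarrow> 'a bob_strategy \<Rightarrow> bool" where
  "bob_strategy X \<sigma> \<longleftrightarrow>
     (\<forall>A0 fs. alice_legal X \<sigma> A0 fs \<longrightarrow> bob_legal_move X (bob_region \<sigma> A0 fs) (\<sigma> A0 fs))"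

text \<open>Bob wins every play following sigma: for every infinite sequence of legal moves of
Alice (alice n = her move in inning n+1), the intersection of the sets B_n is nonempty.\<close>
definition bob_winning :: "'a topology \<Rightarrow> 'a bob_strategy \<Rightarrow> bool" where
  "bob_winning X \<sigma> \<longleftrightarrow> bob_strategy X \<sigma> \<and>
     (\<forall>A0 (alice :: nat \<Rightarrow> 'a set \<Rightarrow> 'a set).
        (\<forall>n. alice_legal X \<sigma> A0 (map alice [0..<n])) \<longrightarrow>
        (\<Inter>n. \<Union>(\<sigma> A0 (map alice [0..<n]))) \<noteq> {})"

definition no_isolated_points :: "'a topology \<Rightarrow> bool" where
  "no_isolated_points X \<longleftrightarrow>
     (\<forall>x \<in> topspace X. \<forall>U. openin X U \<and> x \<in> U \<longrightarrow> (\<exists>y \<in> U. y \<noteq> x))"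

end

theory Submission
  imports Defs
begin

text \<open>Bob runs the given winning strategy \<sigma> in a simulated play and, instead of \<sigma>'s
move \<C>, plays disjoint nonempty open sets g B \<subseteq> B, B \<in> \<C>; these exist because
distinct points of a Hausdorff space have disjoint neighbourhoods and, without isolated
points, every nonempty open set contains more than one point. Alice's reply inside g B is
also a legal reply to B in the simulated play, so the simulated play is won by Bob, and
every set played by \<sigma> in inning n+1 lies inside one of Alice's replies of inning
n+1, hence inside the union of Bob's real move of inning n.\<close>

definition disjoint_shrinking :: "'a topology \<Rightarrow> 'a set set \<Rightarrow> ('a set \<Rightarrow> 'a set) \<Rightarrow> bool" where
  "disjoint_shrinking X \<C> g \<longleftrightarrow>
     (\<forall>B\<in>\<C>. openin X (g B) \<and> g B \<noteq> {} \<and> g B \<subseteq> B) \<and> disjoint_family_on g \<C>"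

lemma no_isolated_points_other_point:
  assumes "no_isolated_points X" "openin X U" "U \<noteq> {}"
  obtains y where "y \<in> U" "y \<noteq> x"
  using assms openin_subset unfolding no_isolated_points_def by blast

lemma disjoint_shrinking_exists:
  assumes Hausdorff: "Hausdorff_space X" and perfect: "no_isolated_points X"
    and "finite \<C>" and "\<forall>B\<in>\<C>. openin X B \<and> B \<noteq> {}"
  shows "\<exists>g. disjoint_shrinking X \<C> g"
  using assms(3,4)
proof (induction \<C> rule: finite_induct)
  case empty
  show ?case by (simp add: disjoint_shrinking_def disjoint_family_on_def)
next
  case (insert B0 \<C>)
  then obtain g where g: "disjoint_shrinking X \<C> g" by auto
  have B0: "openin X B0" "B0 \<noteq> {}" using insert.prems by auto
  then obtain x0 where x0: "x0 \<in> B0" "x0 \<in> topspace X" using openin_subset by blast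
  have "\<exists>y. y \<in> g B \<and> y \<noteq> x0" if "B \<in> \<C>" for B
  proof -
    have "openin X (g B)" "g B \<noteq> {}" using g that by (auto simp: disjoint_shrinking_def)
    then show ?thesis using no_isolated_points_other_point[OF perfect] by blast
  qed
  then obtain y where y: "\<And>B. B \<in> \<C> \<Longrightarrow> y B \<in> g B \<and> y B \<noteq> x0" by metis
  have "y ` \<C> \<subseteq> topspace X"
    using y g openin_subset unfolding disjoint_shrinking_def by blast
  then have "compactin X (y ` \<C>)" using insert.hyps(1) by (simp add: finite_imp_compactin)
  moreover have "disjnt {x0} (y ` \<C>)" using y by auto
  moreover have "compactin X {x0}" using x0 by simp
  ultimately obtain U V where UV: "openin X U" "openin X V" "{x0} \<subseteq> U" "y ` \<C> \<subseteq> V" "disjnt U V"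
    by (metis Hausdorff_space_compact_separation[OF Hausdorff])
  define g' where "g' = (\<lambda>B. g B \<inter> V)(B0 := B0 \<inter> U)"
  have "disjoint_shrinking X (insert B0 \<C>) g'"
    unfolding disjoint_shrinking_def disjoint_family_on_def
  proof (intro conjI ballI impI)
    fix B assume "B \<in> insert B0 \<C>"
    then show "openin X (g' B)" "g' B \<noteq> {}" "g' B \<subseteq> B"
      using g B0 UV x0 y insert.hyps(2)
      unfolding g'_def disjoint_shrinking_def by auto
  next
    fix B B' assume B: "B \<in> insert B0 \<C>" and B': "B' \<in> insert B0 \<C>" and "B \<noteq> B'"
    show "g' B \<inter> g' B' = {}"
    proof (cases "B = B0 \<or> B' = B0")
      case True
      then show ?thesis
        using UV(5) \<open>B \<noteq> B'\<close> unfolding g'_def disjnt_def by auto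
    next
      case False
      then have "B \<in> \<C>" "B' \<in> \<C>" using B B' by auto
      then show ?thesis
        using g False \<open>B \<noteq> B'\<close> unfolding g'_def disjoint_shrinking_def disjoint_family_on_def by auto
    qed
  qed
  then show ?case by blast
qed

definition shrink :: "'a topology \<Rightarrow> 'a set set \<Rightarrow> 'a set \<Rightarrow> 'a set" where
  "shrink X \<C> = (SOME g. disjoint_shrinking X \<C> g)"

lemma disjoint_shrinking_shrink:
  assumes "Hausdorff_space X" "no_isolated_points X" "bob_legal_move X S \<C>"
  shows "disjoint_shrinking X \<C> (shrink X \<C>)"
proof -
  have "finite \<C>" "\<forall>B\<in>\<C>. openin X B \<and> B \<noteq> {}"
    using assms(3) unfolding bob_legal_move_def by auto
  then have "\<exists>g. disjoint_shrinking X \<C> g" by (rule disjoint_shrinking_exists[OF assms(1,2)])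
  then show ?thesis unfolding shrink_def by (rule someI_ex)
qed

lemma bob_legal_move_image:
  assumes "bob_legal_move X S \<C>" "disjoint_shrinking X \<C> g"
  shows "bob_legal_move X S (g ` \<C>)"
  using assms unfolding bob_legal_move_def disjoint_shrinking_def by auto

lemma disjoint_image_disjoint_shrinking:
  "disjoint_shrinking X \<C> g \<Longrightarrow> pairwise disjnt (g ` \<C>)"
  unfolding disjoint_shrinking_def by (blast intro: disjoint_family_on_disjoint_image)

lemma alice_legal_snoc:
  "alice_legal X \<sigma> A0 (fs @ [f]) \<longleftrightarrow> alice_legal X \<sigma> A0 fs \<and>
     (\<forall>B\<in>\<sigma> A0 fs. openin X (f B) \<and> f B \<noteq> {} \<and> f B \<subseteq> B)"
  unfolding alice_legal_def by (auto simp: less_Suc_eq nth_append)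

lemma bob_region_snoc: "bob_region \<sigma> A0 (fs @ [f]) = (\<Union>B\<in>\<sigma> A0 fs. f B)"
  unfolding bob_region_def by auto

lemma bob_region_snoc_subset:
  "alice_legal X \<sigma> A0 (fs @ [f]) \<Longrightarrow> bob_region \<sigma> A0 (fs @ [f]) \<subseteq> \<Union>(\<sigma> A0 fs)"
  unfolding alice_legal_snoc bob_region_snoc by blast

definition simulated_history ::
    "'a topology \<Rightarrow> 'a bob_strategy \<Rightarrow> 'a set \<Rightarrow> ('a set \<Rightarrow> 'a set) list \<Rightarrow> ('a set \<Rightarrow> 'a set) list" where
  "simulated_history X \<sigma> A0 = foldl (\<lambda>hs f. hs @ [\<lambda>B. f (shrink X (\<sigma> A0 hs) B)]) []"

lemma simulated_history_Nil [simp]: "simulated_history X \<sigma> A0 [] = []"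
  by (simp add: simulated_history_def)

lemma simulated_history_snoc [simp]:
  "simulated_history X \<sigma> A0 (fs @ [f]) =
     simulated_history X \<sigma> A0 fs @ [\<lambda>B. f (shrink X (\<sigma> A0 (simulated_history X \<sigma> A0 fs)) B)]"
  by (simp add: simulated_history_def)

definition disjoint_strategy :: "'a topology \<Rightarrow> 'a bob_strategy \<Rightarrow> 'a bob_strategy" where
  "disjoint_strategy X \<sigma> A0 fs =
     shrink X (\<sigma> A0 (simulated_history X \<sigma> A0 fs)) ` \<sigma> A0 (simulated_history X \<sigma> A0 fs)"

lemma bob_region_simulated_history:
  "bob_region \<sigma> A0 (simulated_history X \<sigma> A0 fs) = bob_region (disjoint_strategy X \<sigma>) A0 fs"
proof (cases fs rule: rev_exhaust)
  case Nil
  then show ?thesis by (simp add: bob_region_def)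
next
  case (snoc gs f)
  then show ?thesis by (simp add: bob_region_snoc disjoint_strategy_def image_image)
qed

context
  fixes X :: "'a topology" and \<sigma> :: "'a bob_strategy"
  assumes Hausdorff: "Hausdorff_space X" and perfect: "no_isolated_points X"
    and strategy: "bob_strategy X \<sigma>"
begin

lemma disjoint_shrinking_simulated_move:
  "alice_legal X \<sigma> A0 hs \<Longrightarrow> disjoint_shrinking X (\<sigma> A0 hs) (shrink X (\<sigma> A0 hs))"
  using strategy disjoint_shrinking_shrink[OF Hausdorff perfect]
  unfolding bob_strategy_def by blast

lemma alice_legal_simulated_history:
  "alice_legal X (disjoint_strategy X \<sigma>) A0 fs \<Longrightarrow> alice_legal X \<sigma> A0 (simulated_history X \<sigma> A0 fs)"
proof (induction fs rule: rev_induct)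
  case Nil
  then show ?case by (simp add: alice_legal_def)
next
  case (snoc f fs)
  define \<C> where "\<C> = \<sigma> A0 (simulated_history X \<sigma> A0 fs)"
  have legal: "alice_legal X \<sigma> A0 (simulated_history X \<sigma> A0 fs)"
    using snoc by (simp add: alice_legal_snoc)
  then have "shrink X \<C> B \<subseteq> B" if "B \<in> \<C>" for B
    using disjoint_shrinking_simulated_move that unfolding \<C>_def disjoint_shrinking_def by blast
  moreover have "\<forall>B\<in>\<C>. openin X (f (shrink X \<C> B)) \<and> f (shrink X \<C> B) \<noteq> {} \<and>
      f (shrink X \<C> B) \<subseteq> shrink X \<C> B"
    using snoc.prems by (simp add: alice_legal_snoc disjoint_strategy_def \<C>_def)
  ultimately show ?case using legal by (auto simp: alice_legal_snoc \<C>_def)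
qed

lemma bob_strategy_disjoint_strategy: "bob_strategy X (disjoint_strategy X \<sigma>)"
  unfolding bob_strategy_def
proof (intro allI impI)
  fix A0 fs assume "alice_legal X (disjoint_strategy X \<sigma>) A0 fs"
  then have legal: "alice_legal X \<sigma> A0 (simulated_history X \<sigma> A0 fs)"
    by (rule alice_legal_simulated_history)
  define \<C> where "\<C> = \<sigma> A0 (simulated_history X \<sigma> A0 fs)"
  have "bob_legal_move X (bob_region \<sigma> A0 (simulated_history X \<sigma> A0 fs)) \<C>"
    using strategy legal unfolding bob_strategy_def \<C>_def by blast
  moreover have "disjoint_shrinking X \<C> (shrink X \<C>)"
    using legal unfolding \<C>_def by (rule disjoint_shrinking_simulated_move)
  ultimately have "bob_legal_move X (bob_region \<sigma> A0 (simulated_history X \<sigma> A0 fs)) (shrink X \<C> ` \<C>)"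
    by (rule bob_legal_move_image)
  then show "bob_legal_move X (bob_region (disjoint_strategy X \<sigma>) A0 fs) (disjoint_strategy X \<sigma> A0 fs)"
    by (simp add: bob_region_simulated_history disjoint_strategy_def \<C>_def)
qed

lemma disjoint_strategy_pairwise_disjnt:
  assumes "alice_legal X (disjoint_strategy X \<sigma>) A0 fs"
  shows "pairwise disjnt (disjoint_strategy X \<sigma> A0 fs)"
proof -
  define \<C> where "\<C> = \<sigma> A0 (simulated_history X \<sigma> A0 fs)"
  have "disjoint_shrinking X \<C> (shrink X \<C>)"
    using alice_legal_simulated_history[OF assms] unfolding \<C>_def
    by (rule disjoint_shrinking_simulated_move)
  then show ?thesis
    by (simp add: disjoint_strategy_def \<C>_def disjoint_image_disjoint_shrinking)
qed

lemma bob_winning_disjoint_strategy: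
  assumes "bob_winning X \<sigma>"
  shows "bob_winning X (disjoint_strategy X \<sigma>)"
  unfolding bob_winning_def
proof (intro conjI allI impI bob_strategy_disjoint_strategy)
  fix A0 and alice :: "nat \<Rightarrow> 'a set \<Rightarrow> 'a set"
  let ?\<tau> = "disjoint_strategy X \<sigma>"
  assume legal: "\<forall>n. alice_legal X ?\<tau> A0 (map alice [0..<n])"
  define sim where "sim n = simulated_history X \<sigma> A0 (map alice [0..<n])" for n
  define alice' where "alice' k = (\<lambda>B. alice k (shrink X (\<sigma> A0 (sim k)) B))" for k
  have sim_eq: "sim n = map alice' [0..<n]" for n
    by (induction n) (simp_all add: sim_def alice'_def)
  have sim_legal: "alice_legal X \<sigma> A0 (sim n)" for n
    unfolding sim_def using legal by (blast intro: alice_legal_simulated_history)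
  then have "(\<Inter>n. \<Union>(\<sigma> A0 (map alice' [0..<n]))) \<noteq> {}"
    using assms unfolding bob_winning_def sim_eq by blast
  then obtain x where x: "\<And>n. x \<in> \<Union>(\<sigma> A0 (sim n))"
    unfolding sim_eq by blast
  have "x \<in> \<Union>(?\<tau> A0 (map alice [0..<n]))" for n
  proof -
    have "x \<in> bob_region \<sigma> A0 (sim (Suc n))"
      using strategy sim_legal x[of "Suc n"] unfolding bob_strategy_def bob_legal_move_def by blast
    also have "\<dots> = bob_region ?\<tau> A0 (map alice [0..<n] @ [alice n])"
      by (simp add: sim_def bob_region_simulated_history del: simulated_history_snoc)
    also have "\<dots> \<subseteq> \<Union>(?\<tau> A0 (map alice [0..<n]))"
      using legal[rule_format, of "Suc n"] by (intro bob_region_snoc_subset) simp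
    finally show ?thesis .
  qed
  then show "(\<Inter>n. \<Union>(?\<tau> A0 (map alice [0..<n]))) \<noteq> {}" by blast
qed

end

theorem lemma2p2:
  fixes X :: "'a topology"
  assumes "Hausdorff_space X"
    and "no_isolated_points X"
    and "\<exists>\<sigma>. bob_winning X \<sigma>"
  shows "\<exists>\<sigma>. bob_winning X \<sigma> \<and>
           (\<forall>A0 fs. alice_legal X \<sigma> A0 fs \<longrightarrow> pairwise disjnt (\<sigma> A0 fs))"
proof -
  obtain \<sigma> where winning: "bob_winning X \<sigma>" using assms(3) by blast
  then have strategy: "bob_strategy X \<sigma>" by (simp add: bob_winning_def)
  have "bob_winning X (disjoint_strategy X \<sigma>)"
    using assms(1,2) strategy winning by (rule bob_winning_disjoint_strategy)
  moreover have "\<forall>A0 fs. alice_legal X (disjoint_strategy X \<sigma>) A0 fs \<longrightarrow>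
      pairwise disjnt (disjoint_strategy X \<sigma> A0 fs)"
    using disjoint_strategy_pairwise_disjnt[OF assms(1,2) strategy] by blast
  ultimately show ?thesis by blast
qed

end
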